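(* Let documents $t_1,\ldots,t_N$, each containing at most $L$ distinct words from a dictionary of $D\ge 2$ words, arrive one at a time in a stream. Fix $\epsilon\in(0,1]$ and $p=2\log D$. The streaming algorithm maintains, for each word $x$, a counter $\#(x)$ of the number of documents seen so far containing $x$, and a hash map $H$ keyed by pairs of words, each entry holding a bag of numbers. On arrival of a document, the counters are updated, and for each unordered pair of distinct words $x,y$ in the document, with an independent coin flip of probability $q=\min\!\left(1,\frac{p}{\epsilon}\frac{1}{\sqrt{\#(x)\#(y)}}\right)$ (computed with the current counter values), the value $q$ is inserted into the bag of $(x,y)$ in $H$. Then the expected total memory used by this algorithm (the size of $H$ together with the counters) is $O(DL\lg(N)\log(D)/\epsilon)$.
   Context: $\lg$ is the base-2 logarithm and $\log$ the natural logarithm. Queries for the similarity of $x,y$ are answered by independently subsampling each stored value $q_i$ in the bag of $(x,y)$ with probability $\frac{p}{\epsilon}\frac{1}{q_i\sqrt{\#(x)\#(y)}}$ and scaling the number of survivors by $\epsilon/p$; queries do not affect memory. *)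

theory Defs
  imports "HOL-Probability.Probability"
begin

type_synonym word = nat
(* state: counters #(x), and hash map H from unordered pairs {x,y} to bags of stored values *)
type_synonym state = "(word \<Rightarrow> nat) \<times> (word set \<Rightarrow> real multiset)"

definition doc_pairs :: "word set \<Rightarrow> word set set" where
  "doc_pairs t = {e. e \<subseteq> t \<and> card e = 2}"

definition init_state :: state where
  "init_state = (\<lambda>_. 0, \<lambda>_. {#})"

definition samp_prob :: "real \<Rightarrow> real \<Rightarrow> (word \<Rightarrow> nat) \<Rightarrow> word set \<Rightarrow> real" where
  "samp_prob p eps c e = min 1 (p / eps * (1 / sqrt (\<Prod>x\<in>e. real (c x))))"

definition alg_step :: "real \<Rightarrow> real \<Rightarrow> state \<Rightarrow> word set \<Rightarrow> state pmf" where
  "alg_step p eps s t =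
     (let c' = (\<lambda>x. if x \<in> t then fst s x + 1 else fst s x)
      in map_pmf
           (\<lambda>b. (c', \<lambda>e. snd s e +
                   (if e \<in> doc_pairs t \<and> b e then {# samp_prob p eps c' e #} else {#})))
           (Pi_pmf (doc_pairs t) False (\<lambda>e. bernoulli_pmf (samp_prob p eps c' e))))"

definition run_alg :: "real \<Rightarrow> real \<Rightarrow> word set list \<Rightarrow> state pmf" where
  "run_alg p eps ts = foldl (\<lambda>M t. bind_pmf M (\<lambda>s. alg_step p eps s t)) (return_pmf init_state) ts"

(* memory: D counters + number of keys present in H + total number of stored values *)
definition memory :: "word set \<Rightarrow> state \<Rightarrow> nat" where
  "memory Dict s = card Dict + card {e \<in> doc_pairs Dict. snd s e \<noteq> {#}}
                   + (\<Sum>e\<in>doc_pairs Dict. size (snd s e))"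

end

theory Submission
  imports Defs "HOL-Analysis.Harmonic_Numbers"
begin

text \<open>
  The counters evolve deterministically: after a prefix of the stream, \<open>#(x)\<close> is the number of
  documents of the prefix containing \<open>x\<close>. Memory is at most \<open>D\<close> plus twice the number of stored
  values, and by linearity the expected number of values stored for a document \<open>t\<close> is the sum of
  the sampling probabilities of its pairs. By AM-GM, \<open>1/sqrt(#(x)#(y)) \<le> (1/#(x) + 1/#(y))/2\<close>, and
  since each word of \<open>t\<close> lies in at most \<open>L\<close> pairs of \<open>t\<close>, the contribution of \<open>t\<close> is at most
  \<open>p L/(2\<epsilon>)\<close> times \<open>\<Sum>x\<in>t. 1/#(x)\<close>, which is exactly the increase of the potential
  \<open>\<Sum>x. H(#(x))\<close> built from harmonic numbers. At the end this potential is at most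
  \<open>D (1 + ln N)\<close>, giving the bound \<open>O(D L log N log D / \<epsilon>)\<close> for \<open>p = 2 ln D\<close>.
\<close>

definition doc_count :: "word set list \<Rightarrow> word \<Rightarrow> nat" where
  "doc_count ts x = length (filter (\<lambda>t. x \<in> t) ts)"

definition stored_count :: "word set \<Rightarrow> state \<Rightarrow> real" where
  "stored_count Dict s = (\<Sum>e\<in>doc_pairs Dict. real (size (snd s e)))"

lemma doc_count_snoc:
  "doc_count (ts @ [t]) = (\<lambda>x. if x \<in> t then doc_count ts x + 1 else doc_count ts x)"
  by (auto simp: doc_count_def)

lemma run_alg_snoc:
  "run_alg p eps (ts @ [t]) = run_alg p eps ts \<bind> (\<lambda>s. alg_step p eps s t)"
  by (simp add: run_alg_def)

lemma finite_doc_pairs: "finite A \<Longrightarrow> finite (doc_pairs A)"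
  unfolding doc_pairs_def by (rule finite_subset[of _ "Pow A"]) auto

lemma doc_pairs_mono: "A \<subseteq> B \<Longrightarrow> doc_pairs A \<subseteq> doc_pairs B"
  unfolding doc_pairs_def by auto

lemma doc_pair_cases:
  assumes "e \<in> doc_pairs A"
  obtains x y where "e = {x, y}" "x \<noteq> y" "x \<in> A" "y \<in> A"
  using assms unfolding doc_pairs_def by (auto simp: card_2_iff)

lemma finite_set_pmf_coin_flips:
  "finite A \<Longrightarrow> finite (set_pmf (Pi_pmf A False (\<lambda>e. bernoulli_pmf (q e))))"
  by (rule finite_subset[OF set_Pi_pmf_subset']) auto

lemma
  assumes "finite t"
  shows finite_set_pmf_alg_step: "finite (set_pmf (alg_step p eps s t))"
    and counters_alg_step: "s' \<in> set_pmf (alg_step p eps s t) \<Longrightarrow>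
           fst s' = (\<lambda>x. if x \<in> t then fst s x + 1 else fst s x)"
  using finite_set_pmf_coin_flips[OF finite_doc_pairs[OF assms]]
  by (auto simp: alg_step_def Let_def)

lemma finite_set_pmf_run_alg:
  "\<forall>t\<in>set ts. finite t \<Longrightarrow> finite (set_pmf (run_alg p eps ts))"
  by (induction ts rule: rev_induct)
     (auto simp: run_alg_def finite_set_pmf_alg_step)

lemma counters_run_alg:
  "\<forall>t\<in>set ts. finite t \<Longrightarrow> s \<in> set_pmf (run_alg p eps ts) \<Longrightarrow> fst s = doc_count ts"
proof (induction ts arbitrary: s rule: rev_induct)
  case Nil
  then show ?case by (simp add: run_alg_def init_state_def doc_count_def)
next
  case (snoc t ts)
  then obtain s0 where s0: "s0 \<in> set_pmf (run_alg p eps ts)" "s \<in> set_pmf (alg_step p eps s0 t)"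
    by (auto simp: run_alg_snoc)
  have "fst s0 = doc_count ts" using snoc.IH snoc.prems(1) s0(1) by simp
  moreover have "fst s = (\<lambda>x. if x \<in> t then fst s0 x + 1 else fst s0 x)"
    using snoc.prems(1) s0(2) by (simp add: counters_alg_step)
  ultimately show ?case by (simp only: doc_count_snoc)
qed

lemma samp_prob_nonneg: "0 \<le> p \<Longrightarrow> 0 < eps \<Longrightarrow> 0 \<le> samp_prob p eps c e"
  unfolding samp_prob_def by (auto intro!: divide_nonneg_nonneg mult_nonneg_nonneg prod_nonneg)

lemma samp_prob_le_1: "samp_prob p eps c e \<le> 1"
  unfolding samp_prob_def by simp

lemma expectation_bernoulli_pmf:
  "0 \<le> q \<Longrightarrow> q \<le> 1 \<Longrightarrow> measure_pmf.expectation (bernoulli_pmf q) of_bool = (q :: real)"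
  by (subst integral_measure_pmf_real[where A = UNIV]) (auto simp: UNIV_bool)

lemma expectation_heads_coin_flips:
  fixes q :: "'a \<Rightarrow> real"
  assumes "finite A" "\<And>a. a \<in> A \<Longrightarrow> 0 \<le> q a \<and> q a \<le> 1"
  shows "measure_pmf.expectation (Pi_pmf A False (\<lambda>a. bernoulli_pmf (q a)))
           (\<lambda>b. real (card {a \<in> A. b a})) = (\<Sum>a\<in>A. q a)"
proof -
  let ?P = "Pi_pmf A False (\<lambda>a. bernoulli_pmf (q a))"
  have heads: "real (card {a \<in> A. b a}) = (\<Sum>a\<in>A. of_bool (b a))" for b :: "'a \<Rightarrow> bool"
    using assms(1) by (simp add: Collect_conj_eq)
  have "measure_pmf.expectation ?P (\<lambda>b. \<Sum>a\<in>A. of_bool (b a))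
        = (\<Sum>a\<in>A. measure_pmf.expectation ?P (\<lambda>b. of_bool (b a)) :: real)"
    using finite_set_pmf_coin_flips[OF assms(1), of q]
    by (intro Bochner_Integration.integral_sum integrable_measure_pmf_finite)
  also have "\<dots> = (\<Sum>a\<in>A. q a)"
  proof (rule sum.cong)
    fix a assume "a \<in> A"
    then have "map_pmf (\<lambda>b. b a) ?P = bernoulli_pmf (q a)"
      by (simp add: Pi_pmf_component assms(1))
    then have "measure_pmf.expectation ?P (\<lambda>b. of_bool (b a))
               = (measure_pmf.expectation (bernoulli_pmf (q a)) of_bool :: real)"
      by (metis integral_map_pmf)
    then show "measure_pmf.expectation ?P (\<lambda>b. of_bool (b a)) = q a"
      using assms(2)[OF \<open>a \<in> A\<close>] by (simp add: expectation_bernoulli_pmf)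
  qed simp
  finally show ?thesis by (simp only: heads)
qed

lemma stored_count_alg_step:
  assumes "finite Dict" "t \<subseteq> Dict"
  shows "stored_count Dict (c, \<lambda>e. snd s e + (if e \<in> doc_pairs t \<and> b e then {#v e#} else {#}))
         = stored_count Dict s + real (card {e \<in> doc_pairs t. b e})"
proof -
  have "stored_count Dict (c, \<lambda>e. snd s e + (if e \<in> doc_pairs t \<and> b e then {#v e#} else {#}))
        = stored_count Dict s + (\<Sum>e\<in>doc_pairs Dict. of_bool (e \<in> doc_pairs t \<and> b e))"
    unfolding stored_count_def by (simp add: sum.distrib[symmetric]) (intro sum.cong, auto)
  also have "(\<Sum>e\<in>doc_pairs Dict. of_bool (e \<in> doc_pairs t \<and> b e)) = real (card {e \<in> doc_pairs t. b e})"
    using assms doc_pairs_mono[OF assms(2)] finite_doc_pairs[OF assms(1)]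
    by (simp add: sum.inter_filter[symmetric] Int_def) (metis (mono_tags, lifting) subsetD)
  finally show ?thesis .
qed

lemma expectation_stored_count_alg_step:
  fixes s :: state
  assumes "finite Dict" "t \<subseteq> Dict" "0 \<le> p" "0 < eps"
  defines "c' \<equiv> \<lambda>x. if x \<in> t then fst s x + 1 else fst s x"
  shows "measure_pmf.expectation (alg_step p eps s t) (stored_count Dict) =
         stored_count Dict s + (\<Sum>e\<in>doc_pairs t. samp_prob p eps c' e)"
proof -
  let ?P = "Pi_pmf (doc_pairs t) False (\<lambda>e. bernoulli_pmf (samp_prob p eps c' e))"
  have fin: "finite (doc_pairs t)"
    using assms(1,2) by (meson finite_doc_pairs finite_subset)
  have "measure_pmf.expectation (alg_step p eps s t) (stored_count Dict)
        = measure_pmf.expectation ?P (\<lambda>b. stored_count Dict s + real (card {e \<in> doc_pairs t. b e}))"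
    by (simp add: alg_step_def Let_def c'_def[symmetric] stored_count_alg_step[OF assms(1,2)])
  also have "\<dots> = stored_count Dict s + measure_pmf.expectation ?P (\<lambda>b. real (card {e \<in> doc_pairs t. b e}))"
    using finite_set_pmf_coin_flips[OF fin] by (simp add: integrable_measure_pmf_finite)
  also have "\<dots> = stored_count Dict s + (\<Sum>e\<in>doc_pairs t. samp_prob p eps c' e)"
    using assms(3,4) fin by (simp add: expectation_heads_coin_flips samp_prob_nonneg samp_prob_le_1)
  finally show ?thesis .
qed

lemma expectation_bind_pmf_finite:
  fixes g :: "'b \<Rightarrow> real"
  assumes "finite (set_pmf M)" "\<And>a. a \<in> set_pmf M \<Longrightarrow> finite (set_pmf (f a))"
  shows "measure_pmf.expectation (M \<bind> f) g =
         measure_pmf.expectation M (\<lambda>a. measure_pmf.expectation (f a) g)"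
  using assms
  by (simp add: pmf_expectation_bind[of "set_pmf M"] integral_measure_pmf_real[where A = "set_pmf M"]
      mult.commute)

lemma expectation_stored_count_run_alg_snoc:
  assumes "finite Dict" "\<forall>u\<in>set (ts @ [t]). u \<subseteq> Dict" "0 \<le> p" "0 < eps"
  shows "measure_pmf.expectation (run_alg p eps (ts @ [t])) (stored_count Dict) =
         measure_pmf.expectation (run_alg p eps ts) (stored_count Dict) +
         (\<Sum>e\<in>doc_pairs t. samp_prob p eps (doc_count (ts @ [t])) e)"
proof -
  let ?M = "run_alg p eps ts" and ?S = "\<Sum>e\<in>doc_pairs t. samp_prob p eps (doc_count (ts @ [t])) e"
  have finite_docs: "\<forall>u\<in>set ts. finite u" "finite t"
    using assms(1,2) finite_subset by auto
  have finM: "finite (set_pmf ?M)"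
    using finite_docs(1) by (rule finite_set_pmf_run_alg)
  have "measure_pmf.expectation (run_alg p eps (ts @ [t])) (stored_count Dict) =
        measure_pmf.expectation ?M (\<lambda>s. measure_pmf.expectation (alg_step p eps s t) (stored_count Dict))"
    unfolding run_alg_snoc
    using finM finite_set_pmf_alg_step[OF finite_docs(2)] by (rule expectation_bind_pmf_finite)
  also have "\<dots> = measure_pmf.expectation ?M (\<lambda>s. stored_count Dict s + ?S)"
  proof (intro integral_cong_AE)
    show "AE s in measure_pmf ?M. measure_pmf.expectation (alg_step p eps s t) (stored_count Dict)
                                 = stored_count Dict s + ?S"
      unfolding AE_measure_pmf_iff
    proof
      fix s assume "s \<in> set_pmf ?M"
      then have counters: "fst s = doc_count ts"
        by (rule counters_run_alg[OF finite_docs(1)])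
      show "measure_pmf.expectation (alg_step p eps s t) (stored_count Dict) = stored_count Dict s + ?S"
        using expectation_stored_count_alg_step[OF assms(1) _ assms(3,4), of t s] assms(2)
        unfolding counters doc_count_snoc by simp
    qed
  qed simp_all
  also have "\<dots> = measure_pmf.expectation ?M (stored_count Dict) + ?S"
    using finM by (simp add: integrable_measure_pmf_finite)
  finally show ?thesis .
qed

lemma inverse_sqrt_mult_le_mean:
  "(a::real) > 0 \<Longrightarrow> b > 0 \<Longrightarrow> 1 / sqrt (a * b) \<le> (1 / a + 1 / b) / 2"
  using arith_geo_mean_sqrt[of "1 / a" "1 / b"] by (simp add: real_sqrt_divide real_sqrt_mult)

lemma samp_prob_le_mean_inverse:
  assumes "e \<in> doc_pairs t" "\<forall>x\<in>t. c x \<ge> 1" "0 \<le> p" "0 < eps"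
  shows "samp_prob p eps c e \<le> p / eps / 2 * (\<Sum>z\<in>e. 1 / real (c z))"
proof -
  obtain x y where e: "e = {x, y}" "x \<noteq> y" "x \<in> t" "y \<in> t"
    using assms(1) by (rule doc_pair_cases)
  have pos: "real (c x) > 0" "real (c y) > 0"
    using assms(2) e(3,4) by force+
  have "samp_prob p eps c e \<le> p / eps * (1 / sqrt (real (c x) * real (c y)))"
    unfolding samp_prob_def using e(1,2) by simp
  also have "\<dots> \<le> p / eps * ((1 / real (c x) + 1 / real (c y)) / 2)"
    using assms(3,4) pos by (intro mult_left_mono inverse_sqrt_mult_le_mean) auto
  finally show ?thesis using e(1,2) by simp
qed

lemma sum_doc_pairs_sum_le:
  fixes f :: "word \<Rightarrow> real"
  assumes "finite t" "\<forall>x\<in>t. f x \<ge> 0"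
  shows "(\<Sum>e\<in>doc_pairs t. \<Sum>z\<in>e. f z) \<le> real (card t) * (\<Sum>z\<in>t. f z)"
proof -
  have "(\<Sum>e\<in>doc_pairs t. \<Sum>z\<in>e. f z) = (\<Sum>e\<in>doc_pairs t. \<Sum>z\<in>{z \<in> t. z \<in> e}. f z)"
    by (intro sum.cong refl arg_cong[where f = "sum f"]) (auto simp: doc_pairs_def)
  also have "\<dots> = (\<Sum>z\<in>t. \<Sum>e\<in>{e \<in> doc_pairs t. z \<in> e}. f z)"
    using finite_doc_pairs[OF assms(1)] assms(1) by (rule sum.swap_restrict)
  also have "\<dots> = (\<Sum>z\<in>t. f z * real (card {e \<in> doc_pairs t. z \<in> e}))"
    by (simp add: mult.commute)
  also have "\<dots> \<le> (\<Sum>z\<in>t. f z * real (card t))"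
  proof (intro sum_mono mult_left_mono)
    fix z assume z: "z \<in> t"
    have "{e \<in> doc_pairs t. z \<in> e} \<subseteq> (\<lambda>y. {z, y}) ` t"
    proof
      fix e assume "e \<in> {e \<in> doc_pairs t. z \<in> e}"
      then obtain x y where "e = {x, y}" "x \<in> t" "y \<in> t" "z \<in> e"
        by (auto elim: doc_pair_cases)
      then show "e \<in> (\<lambda>y. {z, y}) ` t" by auto
    qed
    then have "card {e \<in> doc_pairs t. z \<in> e} \<le> card ((\<lambda>y. {z, y}) ` t)"
      using assms(1) by (intro card_mono) auto
    also have "\<dots> \<le> card t"
      using assms(1) by (rule card_image_le)
    finally show "real (card {e \<in> doc_pairs t. z \<in> e}) \<le> real (card t)" by simp
    show "0 \<le> f z" using assms(2) z by blast
  qed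
  also have "\<dots> = real (card t) * (\<Sum>z\<in>t. f z)"
    by (simp add: sum_distrib_right mult.commute)
  finally show ?thesis .
qed

lemma sum_samp_prob_le:
  assumes "finite t" "\<forall>x\<in>t. c x \<ge> 1" "0 \<le> p" "0 < eps"
  shows "(\<Sum>e\<in>doc_pairs t. samp_prob p eps c e) \<le>
         p / eps / 2 * real (card t) * (\<Sum>x\<in>t. 1 / real (c x))"
proof -
  have "(\<Sum>e\<in>doc_pairs t. samp_prob p eps c e) \<le> (\<Sum>e\<in>doc_pairs t. p / eps / 2 * (\<Sum>z\<in>e. 1 / real (c z)))"
    using assms(2-4) by (intro sum_mono samp_prob_le_mean_inverse)
  also have "\<dots> = p / eps / 2 * (\<Sum>e\<in>doc_pairs t. \<Sum>z\<in>e. 1 / real (c z))"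
    by (simp add: sum_distrib_left)
  also have "\<dots> \<le> p / eps / 2 * (real (card t) * (\<Sum>x\<in>t. 1 / real (c x)))"
    using assms(1,3,4) by (intro mult_left_mono sum_doc_pairs_sum_le) auto
  finally show ?thesis by (simp add: mult.assoc)
qed

lemma harm_le_one_plus_ln: "n > 0 \<Longrightarrow> harm n \<le> 1 + ln (real n)"
  using euler_mascheroni_sequence_decreasing[of 1 n] by (simp add: harm_def)

lemma sum_harm_doc_count_snoc:
  assumes "finite Dict" "t \<subseteq> Dict"
  shows "(\<Sum>x\<in>Dict. harm (doc_count (ts @ [t]) x)) =
         (\<Sum>x\<in>Dict. harm (doc_count ts x)) + (\<Sum>x\<in>t. 1 / real (doc_count (ts @ [t]) x))"
proof -
  have "(\<Sum>x\<in>Dict. harm (doc_count (ts @ [t]) x)) =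
        (\<Sum>x\<in>Dict. harm (doc_count ts x) + (if x \<in> t then 1 / real (doc_count (ts @ [t]) x) else 0))"
    by (intro sum.cong) (auto simp: doc_count_snoc harm_Suc field_simps)
  also have "\<dots> = (\<Sum>x\<in>Dict. harm (doc_count ts x)) + (\<Sum>x\<in>t. 1 / real (doc_count (ts @ [t]) x))"
    using assms by (simp add: sum.distrib sum.If_cases Int_absorb1)
  finally show ?thesis .
qed

lemma expectation_stored_count_run_alg_le:
  assumes "finite Dict" "\<forall>t\<in>set ts. t \<subseteq> Dict \<and> card t \<le> L" "0 \<le> p" "0 < eps"
  shows "measure_pmf.expectation (run_alg p eps ts) (stored_count Dict) \<le>
         p / eps / 2 * real L * (\<Sum>x\<in>Dict. harm (doc_count ts x))"
  using assms(2)
proof (induction ts rule: rev_induct)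
  case Nil
  then show ?case by (simp add: run_alg_def init_state_def stored_count_def doc_count_def harm_def)
next
  case (snoc t ts)
  have t: "t \<subseteq> Dict" "card t \<le> L" "finite t"
    using snoc.prems assms(1) finite_subset by auto
  have counts_pos: "\<forall>x\<in>t. doc_count (ts @ [t]) x \<ge> 1"
    by (simp add: doc_count_snoc)
  have "(\<Sum>e\<in>doc_pairs t. samp_prob p eps (doc_count (ts @ [t])) e)
        \<le> p / eps / 2 * real (card t) * (\<Sum>x\<in>t. 1 / real (doc_count (ts @ [t]) x))"
    using t(3) counts_pos assms(3,4) by (rule sum_samp_prob_le)
  also have "\<dots> \<le> p / eps / 2 * real L * (\<Sum>x\<in>t. 1 / real (doc_count (ts @ [t]) x))"
    using t(2) assms(3,4) by (intro mult_right_mono mult_left_mono sum_nonneg) auto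
  finally have "measure_pmf.expectation (run_alg p eps (ts @ [t])) (stored_count Dict)
      \<le> measure_pmf.expectation (run_alg p eps ts) (stored_count Dict)
         + p / eps / 2 * real L * (\<Sum>x\<in>t. 1 / real (doc_count (ts @ [t]) x))"
    using expectation_stored_count_run_alg_snoc[OF assms(1) _ assms(3,4), of ts t] snoc.prems by simp
  with snoc.IH snoc.prems show ?case
    by (simp add: sum_harm_doc_count_snoc[OF assms(1) t(1)] distrib_left)
qed

lemma sum_harm_doc_count_le:
  assumes "finite Dict" "ts \<noteq> []"
  shows "(\<Sum>x\<in>Dict. harm (doc_count ts x)) \<le> real (card Dict) * (1 + ln (real (length ts)))"
proof -
  have "(\<Sum>x\<in>Dict. harm (doc_count ts x)) \<le> (\<Sum>x\<in>Dict. harm (length ts) :: real)"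
    by (intro sum_mono harm_mono) (simp add: doc_count_def)
  also have "\<dots> \<le> (\<Sum>x\<in>Dict. 1 + ln (real (length ts)))"
    using assms(2) by (intro sum_mono harm_le_one_plus_ln) simp
  finally show ?thesis by simp
qed

lemma memory_le_stored_count:
  assumes "finite Dict"
  shows "real (memory Dict s) \<le> real (card Dict) + 2 * stored_count Dict s"
proof -
  have "card {e \<in> doc_pairs Dict. snd s e \<noteq> {#}} = (\<Sum>e\<in>{e \<in> doc_pairs Dict. snd s e \<noteq> {#}}. 1)"
    by simp
  also have "\<dots> \<le> (\<Sum>e\<in>{e \<in> doc_pairs Dict. snd s e \<noteq> {#}}. size (snd s e))"
    by (intro sum_mono) (auto simp: Suc_le_eq nonempty_has_size)
  also have "\<dots> \<le> (\<Sum>e\<in>doc_pairs Dict. size (snd s e))"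
    using finite_doc_pairs[OF assms] by (intro sum_mono2) auto
  finally show ?thesis
    unfolding memory_def stored_count_def by (simp flip: of_nat_sum)
qed

lemma memory_bound_arith:
  fixes D N L eps :: real
  assumes "D \<ge> 2" "N \<ge> 2" "L \<ge> 1" "0 < eps" "eps \<le> 1"
  shows "D + 2 * (2 * ln D / eps / 2 * L * (D * (1 + ln N))) \<le> 6 * D * L * log 2 N * ln D / eps"
proof -
  define R where "R = D * L * log 2 N * ln D / eps"
  have ln2: "2 / 3 \<le> ln (2 :: real)" "ln (2 :: real) \<le> 1"
    using ln2_ge_two_thirds ln_le_minus_one[of "2 :: real"] by simp_all
  have lnD: "2 / 3 \<le> ln D"
    using ln2(1) assms(1) by (smt (verit) ln_le_cancel_iff)
  have lgN: "1 \<le> log 2 N"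
    using assms(2) by simp
  have "ln N \<le> log 2 N"
    using ln2 assms(2) by (simp add: log_def le_divide_eq mult_left_le)
  with lgN have "1 + ln N \<le> 2 * log 2 N"
    by linarith
  then have "D * L * (1 + ln N) * ln D / eps \<le> D * L * (2 * log 2 N) * ln D / eps"
    using lnD assms by (intro divide_right_mono mult_right_mono mult_left_mono) auto
  moreover have "2 * (2 * ln D / eps / 2 * L * (D * (1 + ln N))) = 2 * (D * L * (1 + ln N) * ln D / eps)"
    by (simp add: field_simps)
  moreover have "4 * R = 2 * (D * L * (2 * log 2 N) * ln D / eps)"
    unfolding R_def by (simp add: field_simps)
  ultimately have pairs: "2 * (2 * ln D / eps / 2 * L * (D * (1 + ln N))) \<le> 4 * R"
    by linarith
  have "D * 1 * 1 * (2 / 3) \<le> D * L * log 2 N * ln D"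
    using assms lgN lnD by (intro mult_mono) auto
  moreover have "D * L * log 2 N * ln D \<le> D * L * log 2 N * ln D / eps"
    using assms lgN lnD by (simp add: le_divide_eq mult_left_le)
  ultimately have "D \<le> 2 * R"
    unfolding R_def using assms(1) by linarith
  moreover have "6 * D * L * log 2 N * ln D / eps = 6 * R"
    unfolding R_def by simp
  ultimately show ?thesis
    using pairs by linarith
qed

theorem theorem7:
  shows "\<exists>C>0. \<forall>(Dict :: word set) (ts :: word set list) (L :: nat) (eps :: real).
     finite Dict \<and> card Dict \<ge> 2 \<and> length ts \<ge> 2 \<and> L \<ge> 1 \<and>
     (\<forall>t\<in>set ts. t \<subseteq> Dict \<and> card t \<le> L) \<and> 0 < eps \<and> eps \<le> 1 \<longrightarrow>
     measure_pmf.expectation (run_alg (2 * ln (real (card Dict))) eps ts) (\<lambda>s. real (memory Dict s))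
       \<le> C * real (card Dict) * real L * log 2 (real (length ts)) * ln (real (card Dict)) / eps"
proof (intro exI[of _ 6] conjI allI impI)
  fix Dict :: "word set" and ts :: "word set list" and L :: nat and eps :: real
  assume H: "finite Dict \<and> card Dict \<ge> 2 \<and> length ts \<ge> 2 \<and> L \<ge> 1 \<and>
     (\<forall>t\<in>set ts. t \<subseteq> Dict \<and> card t \<le> L) \<and> 0 < eps \<and> eps \<le> 1"
  define D where "D = real (card Dict)"
  define N where "N = real (length ts)"
  define p where "p = 2 * ln D"
  let ?M = "run_alg p eps ts"
  have p: "0 \<le> p" using H by (simp add: p_def D_def)
  have finM: "finite (set_pmf ?M)"
    using H finite_subset by (intro finite_set_pmf_run_alg) blast
  have "measure_pmf.expectation ?M (\<lambda>s. real (memory Dict s))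
        \<le> measure_pmf.expectation ?M (\<lambda>s. D + 2 * stored_count Dict s)"
    using finM H unfolding D_def
    by (intro integral_mono integrable_measure_pmf_finite memory_le_stored_count) auto
  also have "\<dots> = D + 2 * measure_pmf.expectation ?M (stored_count Dict)"
    using finM by (simp add: integrable_measure_pmf_finite)
  also have "\<dots> \<le> D + 2 * (p / eps / 2 * real L * (\<Sum>x\<in>Dict. harm (doc_count ts x)))"
    using H p by (intro add_left_mono mult_left_mono expectation_stored_count_run_alg_le) auto
  also have "\<dots> \<le> D + 2 * (p / eps / 2 * real L * (D * (1 + ln N)))"
    using H p unfolding D_def N_def by (intro add_left_mono mult_left_mono sum_harm_doc_count_le) auto
  also have "\<dots> \<le> 6 * D * real L * log 2 N * ln D / eps"
    using H unfolding p_def D_def N_def by (intro memory_bound_arith) auto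
  finally show "measure_pmf.expectation (run_alg (2 * ln (real (card Dict))) eps ts) (\<lambda>s. real (memory Dict s))
       \<le> 6 * real (card Dict) * real L * log 2 (real (length ts)) * ln (real (card Dict)) / eps"
    by (simp add: p_def D_def N_def)
qed simp

end
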